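(* Fix $\alpha\in(0,1)$ and let $\mathcal{D}_\alpha=\{d\in(0,\min\{(1-\alpha)\varphi_{\max},\psi_{\max}\}): \psi_\alpha^{-1}(d)<s_{\rm in}\}$, where $$\psi_\alpha^{-1}(d)=\varphi^{-1}\!\left(\frac{d}{1-\alpha}\right)+\frac{\psi^{-1}(d)}{\alpha\beta\gamma}.$$ Then $\mathcal D_\alpha$ is an interval (of the form $(0,\psi_\alpha(s_{\rm in}))$), $f_0^*(\alpha,d)=\big(s_{\rm in}-\psi_\alpha^{-1}(d)\big)\dfrac{\alpha\beta\gamma\, d}{\mu^{-1}(d)}>0$ on $\mathcal D_\alpha$, and $d\mapsto f_0^*(\alpha,d)$ is strictly log-concave on $\mathcal D_\alpha$.
   Context: All parameters $s_{\rm in},\gamma,\beta,\varphi_{\max},k_s,\rho_{\max},k_v,q_{\min},\mu_{\max}$ are strictly positive. $\varphi(s)=\frac{\varphi_{\max}s}{k_s+s}$, $\rho(v)=\frac{\rho_{\max}v}{k_v+v}$ on $[0,\infty)$, $\mu(q)=\mu_{\max}(1-q_{\min}/q)$ on $[q_{\min},\infty)$, with inverses $\varphi^{-1}:[0,\varphi_{\max})\to[0,\infty)$, $\mu^{-1}:[0,\mu_{\max})\to[q_{\min},\infty)$, $\rho^{-1}:[0,\rho_{\max})\to[0,\infty)$. $\psi_{\max}=\frac{\mu_{\max}\rho_{\max}}{\rho_{\max}+q_{\min}\mu_{\max}}$ and $\psi^{-1}(y)=\rho^{-1}(y\,\mu^{-1}(y))$ for $y\in[0,\psi_{\max})$. $f_0^*(\alpha,d)=\frac{d\,(v_{\rm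 in}^*(\alpha,d)-\psi^{-1}(d))}{\mu^{-1}(d)}$ with $v_{\rm in}^*(\alpha,d)=\alpha\beta\gamma\big(s_{\rm in}-\varphi^{-1}(d/(1-\alpha))\big)$. *)

theory Defs
  imports "HOL-Analysis.Analysis"
begin

definition strict_concave_on :: "real set \<Rightarrow> (real \<Rightarrow> real) \<Rightarrow> bool" where
  "strict_concave_on S f \<longleftrightarrow>
     (\<forall>x\<in>S. \<forall>y\<in>S. x \<noteq> y \<longrightarrow> (\<forall>t. 0 < t \<and> t < 1 \<longrightarrow>
        f ((1 - t) * x + t * y) > (1 - t) * f x + t * f y))"

(* Inverses of phi(s) = phimax s/(ks+s), rho(v) = rhomax v/(kv+v),
   mu(q) = mumax (1 - qmin/q), written in closed form on their ranges. *)
definition phi_inv :: "real \<Rightarrow> real \<Rightarrow> real \<Rightarrow> real" where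
  "phi_inv phimax ks y = ks * y / (phimax - y)"

definition rho_inv :: "real \<Rightarrow> real \<Rightarrow> real \<Rightarrow> real" where
  "rho_inv rhomax kv y = kv * y / (rhomax - y)"

definition mu_inv :: "real \<Rightarrow> real \<Rightarrow> real \<Rightarrow> real" where
  "mu_inv qmin mumax y = qmin * mumax / (mumax - y)"

definition psi_max :: "real \<Rightarrow> real \<Rightarrow> real \<Rightarrow> real" where
  "psi_max rhomax qmin mumax = mumax * rhomax / (rhomax + qmin * mumax)"

definition psi_inv :: "real \<Rightarrow> real \<Rightarrow> real \<Rightarrow> real \<Rightarrow> real \<Rightarrow> real" where
  "psi_inv rhomax kv qmin mumax y = rho_inv rhomax kv (y * mu_inv qmin mumax y)"

definition v_in_star ::
  "real \<Rightarrow> real \<Rightarrow> real \<Rightarrow> real \<Rightarrow> real \<Rightarrow> real \<Rightarrow> real \<Rightarrow> real" where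
  "v_in_star s_in gamma beta phimax ks alpha d =
     alpha * beta * gamma * (s_in - phi_inv phimax ks (d / (1 - alpha)))"

definition f0_star ::
  "real \<Rightarrow> real \<Rightarrow> real \<Rightarrow> real \<Rightarrow> real \<Rightarrow> real \<Rightarrow> real \<Rightarrow> real \<Rightarrow> real \<Rightarrow>
   real \<Rightarrow> real \<Rightarrow> real" where
  "f0_star s_in gamma beta phimax ks rhomax kv qmin mumax alpha d =
     d * (v_in_star s_in gamma beta phimax ks alpha d - psi_inv rhomax kv qmin mumax d)
       / mu_inv qmin mumax d"

definition psi_alpha_inv ::
  "real \<Rightarrow> real \<Rightarrow> real \<Rightarrow> real \<Rightarrow> real \<Rightarrow> real \<Rightarrow> real \<Rightarrow> real \<Rightarrow>
   real \<Rightarrow> real \<Rightarrow> real" where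
  "psi_alpha_inv gamma beta phimax ks rhomax kv qmin mumax alpha d =
     phi_inv phimax ks (d / (1 - alpha))
       + psi_inv rhomax kv qmin mumax d / (alpha * beta * gamma)"

definition D_alpha ::
  "real \<Rightarrow> real \<Rightarrow> real \<Rightarrow> real \<Rightarrow> real \<Rightarrow> real \<Rightarrow> real \<Rightarrow> real \<Rightarrow> real \<Rightarrow>
   real \<Rightarrow> real set" where
  "D_alpha s_in gamma beta phimax ks rhomax kv qmin mumax alpha =
     {d. 0 < d \<and> d < min ((1 - alpha) * phimax) (psi_max rhomax qmin mumax) \<and>
         psi_alpha_inv gamma beta phimax ks rhomax kv qmin mumax alpha d < s_in}"

end

theory Submission imports Defs begin

text \<open>
  Each of \<open>\<phi>\<^sup>-\<^sup>1\<close>, \<open>\<rho>\<^sup>-\<^sup>1\<close> and \<open>y \<mapsto> y \<mu>\<^sup>-\<^sup>1(y)\<close> has the form \<open>x \<mapsto> k x / (p - x)\<close>, which is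
  continuous, increasing and convex below its pole \<open>p\<close>. Hence \<open>\<psi>\<^sub>\<alpha>\<^sup>-\<^sup>1\<close> is continuous, strictly
  increasing and convex on \<open>[0, min((1-\<alpha>)\<phi>\<^sub>m\<^sub>a\<^sub>x, \<psi>\<^sub>m\<^sub>a\<^sub>x))\<close>, vanishes at 0 and exceeds \<open>s\<^sub>i\<^sub>n\<close>
  somewhere, so the intermediate value theorem cuts \<open>\<D>\<^sub>\<alpha>\<close> off at the unique \<open>c\<close> with
  \<open>\<psi>\<^sub>\<alpha>\<^sup>-\<^sup>1(c) = s\<^sub>i\<^sub>n\<close>. Since \<open>\<mu>\<^sup>-\<^sup>1(d) = q\<^sub>m\<^sub>i\<^sub>n \<mu>\<^sub>m\<^sub>a\<^sub>x / (\<mu>\<^sub>m\<^sub>a\<^sub>x - d)\<close>, on \<open>\<D>\<^sub>\<alpha>\<close>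
  \<open>ln f\<^sub>0\<^sup>* = ln (s\<^sub>i\<^sub>n - \<psi>\<^sub>\<alpha>\<^sup>-\<^sup>1(d)) + ln (\<mu>\<^sub>m\<^sub>a\<^sub>x - d) + const + ln d\<close>: the first two terms are
  concave (the increasing concave \<open>ln\<close> after a concave function) and \<open>ln d\<close> is strictly concave.
\<close>

lemma strict_concave_on_ln: "strict_concave_on {0<..} ln"
  unfolding strict_concave_on_def
proof (intro ballI impI allI)
  fix x y t :: real
  assume x: "x \<in> {0<..}" and y: "y \<in> {0<..}" and "x \<noteq> y" and t: "0 < t \<and> t < 1"
  define z where "z = (1 - t) * x + t * y"
  have z: "0 < z" using x y t by (simp add: z_def add_pos_pos)
  have "x \<noteq> z" using \<open>x \<noteq> y\<close> t by (auto simp: z_def algebra_simps)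
  then have "ln (x / z) < x / z - 1"
    using z x ln_le_minus_one[of "x / z"] ln_eq_minus_one[of "x / z"] by fastforce
  then have lx: "ln x - ln z < x / z - 1" using x z by (simp add: ln_div)
  have "ln (y / z) \<le> y / z - 1" using y z by (intro ln_le_minus_one) simp
  then have ly: "ln y - ln z \<le> y / z - 1" using y z by (simp add: ln_div)
  have "(1 - t) * (ln x - ln z) + t * (ln y - ln z) < (1 - t) * (x / z - 1) + t * (y / z - 1)"
    using lx ly t by (intro add_less_le_mono mult_strict_left_mono mult_left_mono) auto
  also have "\<dots> = 0" using z by (simp add: z_def field_simps)
  finally show "(1 - t) * ln x + t * ln y < ln ((1 - t) * x + t * y)"
    by (simp add: z_def algebra_simps)
qed

lemma strict_concave_on_subset: "strict_concave_on T f \<Longrightarrow> S \<subseteq> T \<Longrightarrow> strict_concave_on S f"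
  by (auto simp: strict_concave_on_def)

lemma strict_concave_on_add:
  assumes "concave_on S f" and "strict_concave_on S g"
  shows "strict_concave_on S (\<lambda>x. f x + g x)"
  unfolding strict_concave_on_def
proof (intro ballI impI allI)
  fix x y t :: real
  assume "x \<in> S" "y \<in> S" "x \<noteq> y" and t: "0 < t \<and> t < 1"
  then have "(1 - t) * f x + t * f y \<le> f ((1 - t) * x + t * y)"
    using concave_onD[OF assms(1), of t x y] by simp
  moreover have "(1 - t) * g x + t * g y < g ((1 - t) * x + t * y)"
    using assms(2) \<open>x \<in> S\<close> \<open>y \<in> S\<close> \<open>x \<noteq> y\<close> t by (simp add: strict_concave_on_def)
  ultimately show "(1 - t) * (f x + g x) + t * (f y + g y)
      < f ((1 - t) * x + t * y) + g ((1 - t) * x + t * y)"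
    by (simp add: algebra_simps)
qed

lemma strict_concave_on_cong:
  assumes "convex S" and "\<And>x. x \<in> S \<Longrightarrow> f x = g x" and "strict_concave_on S f"
  shows "strict_concave_on S g"
  unfolding strict_concave_on_def
proof (intro ballI impI allI)
  fix x y t :: real
  assume "x \<in> S" "y \<in> S" "x \<noteq> y" and t: "0 < t \<and> t < 1"
  moreover have "(1 - t) * x + t * y \<in> S"
    using convexD_alt[OF assms(1) \<open>x \<in> S\<close> \<open>y \<in> S\<close>, of t] t by simp
  ultimately have "(1 - t) * f x + t * f y < f ((1 - t) * x + t * y)"
    using assms(3) by (simp add: strict_concave_on_def)
  then show "(1 - t) * g x + t * g y < g ((1 - t) * x + t * y)"
    using assms(2) \<open>x \<in> S\<close> \<open>y \<in> S\<close> \<open>(1 - t) * x + t * y \<in> S\<close> by simp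
qed

lemma convex_on_compose_mono:
  fixes f :: "'a::real_vector \<Rightarrow> real" and g :: "real \<Rightarrow> real"
  assumes g: "convex_on T g" "mono_on T g" and f: "convex_on S f" "f ` S \<subseteq> T"
  shows "convex_on S (\<lambda>x. g (f x))"
proof (rule convex_onI)
  show "convex S" using f(1) by (rule convex_on_imp_convex)
  fix t :: real and x y
  assume t: "0 < t" "t < 1" and "x \<in> S" "y \<in> S"
  then have "f ((1 - t) *\<^sub>R x + t *\<^sub>R y) \<in> T"
    using f(2) convexD_alt[OF \<open>convex S\<close>] by (simp add: image_subset_iff)
  moreover have "(1 - t) * f x + t * f y \<in> T"
    using convexD_alt[OF convex_on_imp_convex[OF g(1)]] f(2) \<open>x \<in> S\<close> \<open>y \<in> S\<close> t by (simp add: image_subset_iff)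
  ultimately have "g (f ((1 - t) *\<^sub>R x + t *\<^sub>R y)) \<le> g ((1 - t) * f x + t * f y)"
    using convex_onD[OF f(1), of t x y] \<open>x \<in> S\<close> \<open>y \<in> S\<close> t by (intro mono_onD[OF g(2)]) auto
  also have "\<dots> \<le> (1 - t) * g (f x) + t * g (f y)"
    using convex_onD[OF g(1), of t "f x" "f y"] f(2) \<open>x \<in> S\<close> \<open>y \<in> S\<close> t by auto
  finally show "g (f ((1 - t) *\<^sub>R x + t *\<^sub>R y)) \<le> (1 - t) * g (f x) + t * g (f y)" .
qed

lemma concave_on_compose_mono:
  fixes f :: "'a::real_vector \<Rightarrow> real" and g :: "real \<Rightarrow> real"
  assumes g: "concave_on T g" "mono_on T g" and f: "concave_on S f" "f ` S \<subseteq> T"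
  shows "concave_on S (\<lambda>x. g (f x))"
  unfolding concave_on_def
proof (rule convex_onI)
  show "convex S" using f(1) by (rule concave_on_imp_convex)
  fix t :: real and x y
  assume t: "0 < t" "t < 1" and "x \<in> S" "y \<in> S"
  then have "f ((1 - t) *\<^sub>R x + t *\<^sub>R y) \<in> T"
    using f(2) convexD_alt[OF \<open>convex S\<close>] by (simp add: image_subset_iff)
  moreover have "(1 - t) * f x + t * f y \<in> T"
    using convexD_alt[OF concave_on_imp_convex[OF g(1)]] f(2) \<open>x \<in> S\<close> \<open>y \<in> S\<close> t
    by (simp add: image_subset_iff)
  ultimately have "g ((1 - t) * f x + t * f y) \<le> g (f ((1 - t) *\<^sub>R x + t *\<^sub>R y))"
    using concave_onD[OF f(1), of t x y] \<open>x \<in> S\<close> \<open>y \<in> S\<close> t by (intro mono_onD[OF g(2)]) auto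
  moreover have "(1 - t) * g (f x) + t * g (f y) \<le> g ((1 - t) * f x + t * f y)"
    using concave_onD[OF g(1), of t "f x" "f y"] f(2) \<open>x \<in> S\<close> \<open>y \<in> S\<close> t by auto
  ultimately show "- g (f ((1 - t) *\<^sub>R x + t *\<^sub>R y)) \<le> (1 - t) * - g (f x) + t * - g (f y)"
    by simp
qed

lemma strict_mono_sublevel_set_eq_interval:
  fixes g :: "real \<Rightarrow> real"
  assumes cont: "continuous_on {a..<M} g" and mono: "strict_mono_on {a..<M} g"
    and "g a < s" "b \<in> {a..<M}" "s \<le> g b"
  shows "\<exists>c. a < c \<and> c \<le> b \<and> g c = s \<and> {d. a < d \<and> d < M \<and> g d < s} = {a<..<c}"
proof -
  have "continuous_on {a..b} g"
    using \<open>b \<in> {a..<M}\<close> by (intro continuous_on_subset[OF cont]) auto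
  then obtain c where c: "a \<le> c" "c \<le> b" "g c = s"
    using IVT'[of g a s b] assms(3-5) by auto
  have "a \<noteq> c" using c \<open>g a < s\<close> by auto
  have "c < M" using c \<open>b \<in> {a..<M}\<close> by auto
  have "d < c" if "a < d" "d < M" "g d < s" for d
  proof (rule ccontr)
    assume "\<not> d < c"
    then have "g c \<le> g d"
      using c that by (intro strict_mono_on_imp_mono_on[OF mono, THEN mono_onD]) auto
    then show False using c that by simp
  qed
  moreover have "g d < s" if "a < d" "d < c" for d
    using strict_mono_onD[OF mono, of d c] c that \<open>c < M\<close> by simp
  ultimately show ?thesis
    using c \<open>a \<noteq> c\<close> \<open>c < M\<close> by (intro exI[of _ c]) auto
qed

lemma phi_inv_nonneg: "0 \<le> k \<Longrightarrow> 0 \<le> x \<Longrightarrow> x < p \<Longrightarrow> 0 \<le> phi_inv p k x"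
  by (simp add: phi_inv_def)

lemma phi_inv_strict_mono:
  assumes "0 < k" "0 < p"
  shows "strict_mono_on {..<p} (phi_inv p k)"
proof (rule strict_mono_onI)
  fix x y assume "x \<in> {..<p}" "y \<in> {..<p}" "x < y"
  then have "x * (p - y) < y * (p - x)"
    using \<open>0 < p\<close> by (simp add: algebra_simps)
  then show "phi_inv p k x < phi_inv p k y"
    using assms \<open>x \<in> {..<p}\<close> \<open>y \<in> {..<p}\<close> by (simp add: phi_inv_def divide_simps)
qed

lemma phi_inv_convex:
  assumes "0 \<le> k" "0 < p"
  shows "convex_on {..<p} (phi_inv p k)"
proof (rule convex_onI)
  fix t x y :: real
  assume t: "0 < t" "t < 1" and "x \<in> {..<p}" "y \<in> {..<p}"
  have phi_inv_eq: "phi_inv p k z = k * p * inverse (p - z) - k" if "z < p" for z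
    using that by (simp add: phi_inv_def field_simps)
  have "p - ((1 - t) * x + t * y) = (1 - t) * (p - x) + t * (p - y)"
    by (simp add: algebra_simps)
  moreover have "inverse ((1 - t) * (p - x) + t * (p - y))
      \<le> (1 - t) * inverse (p - x) + t * inverse (p - y)"
    using convex_onD[OF convex_on_inverse[of "{0<..}"], of t "p - x" "p - y"]
      t \<open>x \<in> {..<p}\<close> \<open>y \<in> {..<p}\<close> by simp
  ultimately have "k * p * inverse (p - ((1 - t) * x + t * y))
      \<le> k * p * ((1 - t) * inverse (p - x) + t * inverse (p - y))"
    using assms by (simp add: mult_left_mono)
  moreover have "(1 - t) * x + t * y < p"
    using convexD_alt[of "{..<p}" x y t] t \<open>x \<in> {..<p}\<close> \<open>y \<in> {..<p}\<close> by simp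
  ultimately show "phi_inv p k ((1 - t) *\<^sub>R x + t *\<^sub>R y) \<le> (1 - t) * phi_inv p k x + t * phi_inv p k y"
    using \<open>x \<in> {..<p}\<close> \<open>y \<in> {..<p}\<close> by (simp add: phi_inv_eq algebra_simps)
qed simp

definition michaelis_menten :: "real \<Rightarrow> real \<Rightarrow> real \<Rightarrow> real" where
  "michaelis_menten p k s = p * s / (k + s)"

lemma michaelis_menten_nonneg: "0 \<le> p \<Longrightarrow> 0 \<le> k \<Longrightarrow> 0 \<le> s \<Longrightarrow> 0 \<le> michaelis_menten p k s"
  by (simp add: michaelis_menten_def)

lemma michaelis_menten_less: "0 < p \<Longrightarrow> 0 < k \<Longrightarrow> 0 \<le> s \<Longrightarrow> michaelis_menten p k s < p"
  by (simp add: michaelis_menten_def divide_simps)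

lemma phi_inv_michaelis_menten:
  "0 < p \<Longrightarrow> 0 < k \<Longrightarrow> 0 \<le> s \<Longrightarrow> phi_inv p k (michaelis_menten p k s) = s"
  by (simp add: michaelis_menten_def phi_inv_def divide_simps) (simp add: algebra_simps)

lemma phi_inv_less_iff:
  assumes "0 < k" "0 \<le> x" "x < p" "0 \<le> y"
  shows "phi_inv p k x < y \<longleftrightarrow> x < michaelis_menten p k y"
  using assms by (simp add: phi_inv_def michaelis_menten_def divide_simps) (simp add: algebra_simps)

lemma psi_max_eq: "psi_max rhomax qmin mumax = michaelis_menten mumax (qmin * mumax) rhomax"
  by (simp add: psi_max_def michaelis_menten_def add.commute mult.commute)

lemma psi_inv_eq:
  "psi_inv rhomax kv qmin mumax y = phi_inv rhomax kv (phi_inv mumax (qmin * mumax) y)"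
  by (simp add: psi_inv_def rho_inv_def phi_inv_def mu_inv_def mult.commute)

locale chemostat =
  fixes s_in gamma beta phimax ks rhomax kv qmin mumax alpha :: real
  assumes pos: "0 < s_in" "0 < gamma" "0 < beta" "0 < phimax" "0 < ks"
    "0 < rhomax" "0 < kv" "0 < qmin" "0 < mumax" "0 < alpha"
    and alpha_less_1: "alpha < 1"
begin

abbreviation dmax :: real where
  "dmax \<equiv> min ((1 - alpha) * phimax) (psi_max rhomax qmin mumax)"

abbreviation psia_inv :: "real \<Rightarrow> real" where
  "psia_inv \<equiv> psi_alpha_inv gamma beta phimax ks rhomax kv qmin mumax alpha"

abbreviation f0 :: "real \<Rightarrow> real" where
  "f0 \<equiv> f0_star s_in gamma beta phimax ks rhomax kv qmin mumax alpha"

abbreviation D :: "real set" where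
  "D \<equiv> D_alpha s_in gamma beta phimax ks rhomax kv qmin mumax alpha"

lemma psia_inv_eq:
  "psia_inv d = phi_inv phimax ks (d / (1 - alpha))
     + phi_inv rhomax kv (phi_inv mumax (qmin * mumax) d) / (alpha * beta * gamma)"
  by (simp add: psi_alpha_inv_def psi_inv_eq)

lemma below_dmax:
  assumes "0 \<le> d" "d < dmax"
  shows "d / (1 - alpha) < phimax" "d < mumax" "phi_inv mumax (qmin * mumax) d < rhomax"
proof -
  show "d / (1 - alpha) < phimax"
    using assms alpha_less_1 by (simp add: divide_simps mult.commute)
  have "d < michaelis_menten mumax (qmin * mumax) rhomax"
    using assms by (simp add: psi_max_eq)
  moreover have "michaelis_menten mumax (qmin * mumax) rhomax < mumax"
    using pos by (intro michaelis_menten_less) auto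
  ultimately show "d < mumax" "phi_inv mumax (qmin * mumax) d < rhomax"
    using phi_inv_less_iff[of "qmin * mumax" d mumax rhomax] assms pos by auto
qed

lemma psia_inv_continuous: "continuous_on {0..<dmax} psia_inv"
proof -
  have "\<forall>d\<in>{0..<dmax}. phimax - d / (1 - alpha) \<noteq> 0 \<and> mumax - d \<noteq> 0
      \<and> rhomax - phi_inv mumax (qmin * mumax) d \<noteq> 0"
    using below_dmax by fastforce
  then show ?thesis
    unfolding psia_inv_eq[abs_def] phi_inv_def using pos alpha_less_1
    by (intro continuous_intros) auto
qed

lemma psia_inv_strict_mono: "strict_mono_on {0..<dmax} psia_inv"
proof (rule strict_mono_onI)
  fix x y assume x: "x \<in> {0..<dmax}" and y: "y \<in> {0..<dmax}" and "x < y"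
  have "x / (1 - alpha) < y / (1 - alpha)"
    using \<open>x < y\<close> alpha_less_1 by (simp add: divide_strict_right_mono)
  then have "phi_inv phimax ks (x / (1 - alpha)) < phi_inv phimax ks (y / (1 - alpha))"
    using below_dmax[of y] y pos by (intro strict_mono_onD[OF phi_inv_strict_mono]) auto
  moreover have "phi_inv mumax (qmin * mumax) x \<le> phi_inv mumax (qmin * mumax) y"
    using below_dmax[of x] below_dmax[of y] x y \<open>x < y\<close> pos
    by (intro strict_mono_on_imp_mono_on[OF phi_inv_strict_mono, THEN mono_onD]) auto
  then have "phi_inv rhomax kv (phi_inv mumax (qmin * mumax) x)
      \<le> phi_inv rhomax kv (phi_inv mumax (qmin * mumax) y)"
    using below_dmax[of x] below_dmax[of y] x y pos
    by (intro strict_mono_on_imp_mono_on[OF phi_inv_strict_mono[of kv rhomax], THEN mono_onD]) auto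
  then have "phi_inv rhomax kv (phi_inv mumax (qmin * mumax) x) / (alpha * beta * gamma)
      \<le> phi_inv rhomax kv (phi_inv mumax (qmin * mumax) y) / (alpha * beta * gamma)"
    using pos by (intro divide_right_mono) auto
  ultimately show "psia_inv x < psia_inv y"
    by (simp add: psia_inv_eq)
qed

lemma psia_inv_convex: "convex_on {0..<dmax} psia_inv"
proof -
  have phimax_part: "convex_on {0..<dmax} (\<lambda>d. phi_inv phimax ks (d / (1 - alpha)))"
  proof (rule convex_on_compose_mono[where g = "phi_inv phimax ks"])
    show "convex_on {..<phimax} (phi_inv phimax ks)" "mono_on {..<phimax} (phi_inv phimax ks)"
      using pos by (auto intro: phi_inv_convex strict_mono_on_imp_mono_on phi_inv_strict_mono)
    show "convex_on {0..<dmax} (\<lambda>d. d / (1 - alpha))"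
      using alpha_less_1 by (intro convex_on_cdiv) (auto simp: convex_on_ident)
    show "(\<lambda>d. d / (1 - alpha)) ` {0..<dmax} \<subseteq> {..<phimax}"
      using below_dmax by auto
  qed
  have rhomax_part: "convex_on {0..<dmax} (\<lambda>d. phi_inv rhomax kv (phi_inv mumax (qmin * mumax) d))"
  proof (rule convex_on_compose_mono[where g = "phi_inv rhomax kv"])
    show "convex_on {..<rhomax} (phi_inv rhomax kv)" "mono_on {..<rhomax} (phi_inv rhomax kv)"
      using pos by (auto intro: phi_inv_convex strict_mono_on_imp_mono_on phi_inv_strict_mono)
    show "convex_on {0..<dmax} (phi_inv mumax (qmin * mumax))"
      using pos below_dmax by (intro convex_on_subset[OF phi_inv_convex]) auto
    show "phi_inv mumax (qmin * mumax) ` {0..<dmax} \<subseteq> {..<rhomax}"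
      using below_dmax by auto
  qed
  have "psia_inv = (\<lambda>d. phi_inv phimax ks (d / (1 - alpha))
     + phi_inv rhomax kv (phi_inv mumax (qmin * mumax) d) / (alpha * beta * gamma))"
    by (simp add: fun_eq_iff psia_inv_eq)
  then show ?thesis
    using phimax_part rhomax_part pos by (auto intro!: convex_on_add convex_on_cdiv)
qed

lemma psia_inv_reaches_s_in: "\<exists>b\<in>{0..<dmax}. s_in \<le> psia_inv b"
proof -
  let ?K = "alpha * beta * gamma"
  have terms_le: "phi_inv phimax ks (d / (1 - alpha)) \<le> psia_inv d"
    "phi_inv rhomax kv (phi_inv mumax (qmin * mumax) d) / ?K \<le> psia_inv d"
    if "0 \<le> d" "d < dmax" for d
    using below_dmax[OF that] that pos alpha_less_1
    by (simp_all add: psia_inv_eq phi_inv_nonneg)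
  \<comment> \<open>At \<open>d1\<close> (resp. \<open>d2\<close>) the first (resp. second) summand of \<open>psia_inv\<close> equals \<open>s_in\<close>.\<close>
  define d1 where "d1 = (1 - alpha) * michaelis_menten phimax ks s_in"
  define y2 where "y2 = michaelis_menten rhomax kv (?K * s_in)"
  define d2 where "d2 = michaelis_menten mumax (qmin * mumax) y2"
  have d1: "0 \<le> d1" "d1 < (1 - alpha) * phimax" "phi_inv phimax ks (d1 / (1 - alpha)) = s_in"
    using pos alpha_less_1 michaelis_menten_nonneg[of phimax ks s_in]
      michaelis_menten_less[of phimax ks s_in]
    by (simp_all add: d1_def phi_inv_michaelis_menten)
  have y2: "0 \<le> y2" "y2 < rhomax" "phi_inv rhomax kv y2 = ?K * s_in"
    using pos by (simp_all add: y2_def michaelis_menten_nonneg michaelis_menten_less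
        phi_inv_michaelis_menten)
  have d2: "0 \<le> d2" "d2 < mumax" "phi_inv mumax (qmin * mumax) d2 = y2"
    using pos y2 by (simp_all add: d2_def michaelis_menten_nonneg michaelis_menten_less
        phi_inv_michaelis_menten)
  then have "d2 < psi_max rhomax qmin mumax"
    using phi_inv_less_iff[of "qmin * mumax" d2 mumax rhomax] y2 pos by (simp add: psi_max_eq)
  show ?thesis
  proof (cases "d1 \<le> d2")
    case True
    then show ?thesis
      using d1 \<open>d2 < psi_max rhomax qmin mumax\<close> terms_le(1)[of d1] by (intro bexI[of _ d1]) auto
  next
    case False
    then have "s_in \<le> psia_inv d2"
      using d1 d2 y2 \<open>d2 < psi_max rhomax qmin mumax\<close> terms_le(2)[of d2] pos by simp
    then show ?thesis
      using False d1 d2 \<open>d2 < psi_max rhomax qmin mumax\<close> by (intro bexI[of _ d2]) auto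
  qed
qed

lemma D_alpha_eq_interval:
  "\<exists>c. 0 < c \<and> c < dmax \<and> psia_inv c = s_in \<and> D = {0<..<c}"
proof -
  obtain b where "b \<in> {0..<dmax}" "s_in \<le> psia_inv b"
    using psia_inv_reaches_s_in by blast
  moreover have "psia_inv 0 < s_in"
    using pos by (simp add: psia_inv_eq phi_inv_def)
  ultimately obtain c where "0 < c" "c \<le> b" "psia_inv c = s_in"
      "{d. 0 < d \<and> d < dmax \<and> psia_inv d < s_in} = {0<..<c}"
    using strict_mono_sublevel_set_eq_interval[OF psia_inv_continuous psia_inv_strict_mono] by blast
  then show ?thesis
    using \<open>b \<in> {0..<dmax}\<close> by (intro exI[of _ c]) (auto simp: D_alpha_def)
qed

lemma f0_eq: "f0 d = (s_in - psia_inv d) * (alpha * beta * gamma * d / mu_inv qmin mumax d)"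
proof -
  have "(s_in - psia_inv d) * (alpha * beta * gamma)
      = alpha * beta * gamma * (s_in - phi_inv phimax ks (d / (1 - alpha)))
        - psi_inv rhomax kv qmin mumax d"
    using pos by (simp add: psi_alpha_inv_def field_simps)
  then have "f0 d = d * ((s_in - psia_inv d) * (alpha * beta * gamma)) / mu_inv qmin mumax d"
    by (simp add: f0_star_def v_in_star_def)
  then show ?thesis by simp
qed

lemma f0_pos: "d \<in> D \<Longrightarrow> 0 < f0 d"
  using pos below_dmax(2)[of d]
  by (auto simp: D_alpha_def f0_eq mu_inv_def intro!: mult_pos_pos divide_pos_pos)

lemma ln_f0_eq:
  assumes "d \<in> D"
  shows "ln (f0 d) = ln (s_in - psia_inv d) + ln (mumax - d)
    + ln (alpha * beta * gamma / (qmin * mumax)) + ln d"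
proof -
  define C where "C = alpha * beta * gamma / (qmin * mumax)"
  have "0 < d" "0 < mumax - d" "0 < s_in - psia_inv d"
    using assms below_dmax(2) by (auto simp: D_alpha_def)
  moreover have "0 < C" using pos by (simp add: C_def)
  moreover have "f0 d = (s_in - psia_inv d) * (mumax - d) * C * d"
    using \<open>0 < mumax - d\<close> pos by (simp add: f0_eq mu_inv_def C_def field_simps)
  ultimately show "ln (f0 d) = ln (s_in - psia_inv d) + ln (mumax - d) + ln C + ln d"
    by (simp add: ln_mult)
qed

lemma ln_f0_strict_concave: "strict_concave_on D (\<lambda>d. ln (f0 d))"
proof -
  obtain c where "0 < c" "c < dmax" and D_eq: "D = {0<..<c}"
    using D_alpha_eq_interval by blast
  have D_sub: "D \<subseteq> {0..<dmax}" using D_eq \<open>c < dmax\<close> by auto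
  have mono_ln: "mono_on {0<..} (ln :: real \<Rightarrow> real)" by (rule mono_onI) simp
  have "concave_on D (\<lambda>d. ln (s_in - psia_inv d))"
  proof (rule concave_on_compose_mono[OF ln_concave mono_ln])
    show "concave_on D (\<lambda>d. s_in - psia_inv d)"
      using D_eq D_sub by (intro concave_on_diff convex_on_subset[OF psia_inv_convex])
        (auto simp: concave_on_const)
    show "(\<lambda>d. s_in - psia_inv d) ` D \<subseteq> {0<..}"
      by (auto simp: D_alpha_def)
  qed
  moreover have "concave_on D (\<lambda>d. ln (mumax - d))"
  proof (rule concave_on_compose_mono[OF ln_concave mono_ln])
    show "concave_on D (\<lambda>d. mumax - d)"
      using D_eq by (intro concave_on_diff) (auto simp: concave_on_const convex_on_ident)
    show "(\<lambda>d. mumax - d) ` D \<subseteq> {0<..}"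
      using D_sub below_dmax(2) by fastforce
  qed
  ultimately have "concave_on D (\<lambda>d. ln (s_in - psia_inv d) + ln (mumax - d)
      + ln (alpha * beta * gamma / (qmin * mumax)))"
    using D_eq by (intro concave_on_add) (auto simp: concave_on_const)
  moreover have "strict_concave_on D ln"
    using D_eq by (intro strict_concave_on_subset[OF strict_concave_on_ln]) auto
  ultimately have "strict_concave_on D (\<lambda>d. ln (s_in - psia_inv d) + ln (mumax - d)
      + ln (alpha * beta * gamma / (qmin * mumax)) + ln d)"
    by (rule strict_concave_on_add)
  then show ?thesis
    by (rule strict_concave_on_cong[rotated 2]) (simp_all add: D_eq ln_f0_eq)
qed

end

theorem lemma2:
  fixes s_in gamma beta phimax ks rhomax kv qmin mumax alpha :: real
  assumes "0 < s_in" "0 < gamma" "0 < beta" "0 < phimax" "0 < ks"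
    "0 < rhomax" "0 < kv" "0 < qmin" "0 < mumax"
    and "0 < alpha" "alpha < 1"
  defines "D \<equiv> D_alpha s_in gamma beta phimax ks rhomax kv qmin mumax alpha"
    and "f \<equiv> f0_star s_in gamma beta phimax ks rhomax kv qmin mumax alpha"
  shows "(\<exists>c. 0 < c \<and> c < min ((1 - alpha) * phimax) (psi_max rhomax qmin mumax) \<and>
              psi_alpha_inv gamma beta phimax ks rhomax kv qmin mumax alpha c = s_in \<and>
              D = {0<..<c})
     \<and> (\<forall>d\<in>D. f d = (s_in - psi_alpha_inv gamma beta phimax ks rhomax kv qmin mumax alpha d)
                       * (alpha * beta * gamma * d / mu_inv qmin mumax d)
               \<and> 0 < f d)
     \<and> strict_concave_on D (\<lambda>d. ln (f d))"
proof -
  interpret chemostat s_in gamma beta phimax ks rhomax kv qmin mumax alpha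
    using assms(1-11) by unfold_locales
  show ?thesis
    unfolding D_def f_def using f0_pos
    by (intro conjI ballI D_alpha_eq_interval f0_eq ln_f0_strict_concave) auto
qed

end
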